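(* Let $S$ be a finite set and let $\Pi(S)$ be the lattice of partitions of $S$ ordered by refinement. For indeterminates $q_1,q_2$ define the matrix $\mu_{q_1,q_2}$ on $\Pi(S)\times\Pi(S)$ by \[ \mu_{q_1,q_2}(\sigma,\pi)=\begin{cases}\prod_{i=1}^k\prod_{j=1}^{\lambda_i-1}(q_2-jq_1) & \text{if }\sigma\le\pi=\{B_1,\dots,B_k\}\text{ and }B_i\text{ is partitioned into }\lambda_i\text{ blocks in }\sigma,\\ 0&\text{if }\sigma\not\le\pi.\end{cases} \] Then, as an identity of matrices with entries in $\mathbb{Z}[q_1,q_2,q_3]$, \[ \mu_{q_1,q_2}\,\mu_{q_2,q_3}=\mu_{q_1,q_3} \] (matrix multiplication).
   Context: $\sigma\le\pi$ means that $\sigma$ refines $\pi$ (every block of $\sigma$ is contained in a block of $\pi$). Matrix multiplication is $(M N)(\sigma,\pi)=\sum_{\tau\in\Pi(S)}M(\sigma,\tau)N(\tau,\pi)$. *)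

theory Defs
  imports Main "HOL-Library.Disjoint_Sets"
begin

definition partitions :: "'b set \<Rightarrow> 'b set set set" where
  "partitions S = {P. partition_on S P}"

definition refines :: "'b set set \<Rightarrow> 'b set set \<Rightarrow> bool" where
  "refines \<sigma> \<pi> \<longleftrightarrow> (\<forall>C\<in>\<sigma>. \<exists>B\<in>\<pi>. C \<subseteq> B)"

definition nblocks :: "'b set set \<Rightarrow> 'b set \<Rightarrow> nat" where
  "nblocks \<sigma> B = card {C\<in>\<sigma>. C \<subseteq> B}"

definition mu :: "'a::comm_ring_1 \<Rightarrow> 'a \<Rightarrow> 'b set set \<Rightarrow> 'b set set \<Rightarrow> 'a" where
  "mu q1 q2 \<sigma> \<pi> =
     (if refines \<sigma> \<pi>
      then (\<Prod>B\<in>\<pi>. \<Prod>j\<in>{1..<nblocks \<sigma> B}. (q2 - of_nat j * q1))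
      else 0)"

end

theory Submission
  imports Defs
begin

text \<open>
  Induction on the number of blocks of \<open>\<sigma>\<close>. Let \<open>D\<close> be a block of \<open>\<sigma>\<close> and \<open>\<sigma>\<^sub>0 = \<sigma> - {D}\<close>,
  a partition of \<open>S - D\<close>. Every coarsening of \<open>\<sigma>\<close> arises in exactly one way from a coarsening
  \<open>\<tau>\<close> of \<open>\<sigma>\<^sub>0\<close>, either by adding \<open>D\<close> as a new block or by merging \<open>D\<close> into a block \<open>C\<close> of
  \<open>\<tau>\<close>; likewise \<open>\<pi>\<close> has \<open>D\<close> as a block or arises from some \<open>\<pi>\<^sub>0\<close> by merging \<open>D\<close> into a block
  \<open>A\<close>. Each such operation changes \<open>\<mu>\<close> by at most one linear factor: merging \<open>D\<close> into a block
  containing \<open>\<lambda>\<close> blocks of the finer partition multiplies \<open>\<mu>\<^bsub>q',q\<^esub>\<close> by \<open>q - \<lambda> q'\<close>. In the interesting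
  case, where \<open>A\<close> contains \<open>k\<close> blocks of \<open>\<tau>\<close>, the contributions of \<open>\<tau>\<close> to the sum therefore
  add up to \<open>\<mu>\<^bsub>q\<^sub>1,q\<^sub>2\<^esub>(\<sigma>\<^sub>0,\<tau>) \<mu>\<^bsub>q\<^sub>2,q\<^sub>3\<^esub>(\<tau>,\<pi>\<^sub>0)\<close> times
  \<open>(q\<^sub>3 - k q\<^sub>2) + \<Sum>\<^bsub>C \<subseteq> A\<^esub> (q\<^sub>2 - \<lambda>\<^sub>C q\<^sub>1) = q\<^sub>3 - \<lambda>\<^sub>A q\<^sub>1\<close>, which is exactly
  the factor relating \<open>\<mu>\<^bsub>q\<^sub>1,q\<^sub>3\<^esub>(\<sigma>,\<pi>)\<close> to \<open>\<mu>\<^bsub>q\<^sub>1,q\<^sub>3\<^esub>(\<sigma>\<^sub>0,\<pi>\<^sub>0)\<close>.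
\<close>

definition block_factor :: "'a::comm_ring_1 \<Rightarrow> 'a \<Rightarrow> nat \<Rightarrow> 'a" where
  "block_factor a b m = (\<Prod>j\<in>{1..<m}. b - of_nat j * a)"

lemma mu_altdef:
  "mu a b \<sigma> \<pi> = (if refines \<sigma> \<pi> then \<Prod>B\<in>\<pi>. block_factor a b (nblocks \<sigma> B) else 0)"
  by (simp add: mu_def block_factor_def)

lemma block_factor_Suc_0 [simp]: "block_factor a b (Suc 0) = 1"
  by (simp add: block_factor_def)

lemma block_factor_Suc:
  "m \<ge> 1 \<Longrightarrow> block_factor a b (Suc m) = block_factor a b m * (b - of_nat m * a)"
  by (simp add: block_factor_def prod.atLeastLessThan_Suc)

lemma partition_on_block_subset: "partition_on S P \<Longrightarrow> B \<in> P \<Longrightarrow> B \<subseteq> S"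
  by (auto simp: partition_on_def)

lemma partition_on_block_nonempty: "partition_on S P \<Longrightarrow> B \<in> P \<Longrightarrow> B \<noteq> {}"
  by (auto simp: partition_on_def)

lemma partition_on_block_eq:
  "partition_on S P \<Longrightarrow> B \<in> P \<Longrightarrow> B' \<in> P \<Longrightarrow> x \<in> B \<Longrightarrow> x \<in> B' \<Longrightarrow> B = B'"
  by (auto simp: partition_on_def disjoint_def)

lemma partition_on_Diff_block:
  assumes "partition_on S P" "B \<in> P"
  shows "partition_on (S - B) (P - {B})"
proof -
  have "disjnt B (\<Union>(P - {B}))"
    using partition_on_block_eq[OF assms(1) assms(2)] by (auto simp: disjnt_def)
  with assms show ?thesis
    using partition_on_insert[of B "P - {B}" S] by (simp add: insert_absorb)
qed

lemma partition_on_insert_disjnt: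
  assumes "partition_on S P" "disjnt B S" "B \<noteq> {}"
  shows "partition_on (B \<union> S) (insert B P)"
proof -
  have "disjnt B (\<Union>P)" using assms(1,2) by (simp add: partition_on_def)
  moreover have "B \<union> S - B = S" using assms(2) by (auto simp: disjnt_def)
  ultimately show ?thesis using assms partition_on_insert[of B P "B \<union> S"] by auto
qed

lemma refines_trans: "refines \<sigma> \<tau> \<Longrightarrow> refines \<tau> \<pi> \<Longrightarrow> refines \<sigma> \<pi>"
  unfolding refines_def by (meson order_trans)

lemma refines_block_cases:
  assumes "partition_on S \<pi>" "A \<in> \<pi>" "refines \<tau> \<pi>" "C \<in> \<tau>"
  shows "C \<subseteq> A \<or> C \<inter> A = {}"
proof -
  obtain B where "B \<in> \<pi>" "C \<subseteq> B" using assms(3,4) by (auto simp: refines_def)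
  then show ?thesis using partition_on_block_eq[OF assms(1) \<open>B \<in> \<pi>\<close> assms(2)] by blast
qed

lemma nblocks_insert:
  assumes "finite \<sigma>" "D \<notin> \<sigma>"
  shows "nblocks (insert D \<sigma>) B = (if D \<subseteq> B then Suc (nblocks \<sigma> B) else nblocks \<sigma> B)"
proof -
  have "{C \<in> insert D \<sigma>. C \<subseteq> B} = (if D \<subseteq> B then insert D {C \<in> \<sigma>. C \<subseteq> B} else {C \<in> \<sigma>. C \<subseteq> B})"
    by auto
  then show ?thesis using assms by (simp add: nblocks_def)
qed

lemma nblocks_empty: "partition_on S \<sigma> \<Longrightarrow> nblocks \<sigma> {} = 0"
  by (auto simp: nblocks_def partition_on_def)

lemma nblocks_pos:
  assumes "finite \<sigma>" "partition_on S \<sigma>" "partition_on S \<pi>" "refines \<sigma> \<pi>" "A \<in> \<pi>"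
  shows "nblocks \<sigma> A \<ge> 1"
proof -
  obtain x where x: "x \<in> A" using partition_on_block_nonempty[OF assms(3,5)] by blast
  then obtain E where E: "E \<in> \<sigma>" "x \<in> E"
    using partition_on_block_subset[OF assms(3,5)] assms(2) by (auto simp: partition_on_def)
  then have "E \<subseteq> A" using refines_block_cases[OF assms(3,5,4)] x by blast
  with E assms(1) show ?thesis by (auto simp: nblocks_def Suc_le_eq card_gt_0_iff)
qed

lemma sum_nblocks:
  assumes "finite \<sigma>" "finite \<tau>" "partition_on S \<sigma>" "partition_on S \<tau>" "refines \<sigma> \<tau>"
    and A: "\<forall>C\<in>\<tau>. C \<subseteq> A \<or> C \<inter> A = {}"
  shows "(\<Sum>C\<in>{C\<in>\<tau>. C \<subseteq> A}. nblocks \<sigma> C) = nblocks \<sigma> A"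
proof -
  let ?T = "{C\<in>\<tau>. C \<subseteq> A}"
  have "{E\<in>\<sigma>. E \<subseteq> A} = (\<Union>C\<in>?T. {E\<in>\<sigma>. E \<subseteq> C})"
  proof (intro equalityI subsetI)
    fix E assume E: "E \<in> {E\<in>\<sigma>. E \<subseteq> A}"
    then obtain C where "C \<in> \<tau>" "E \<subseteq> C" using assms(5) by (auto simp: refines_def)
    moreover have "E \<noteq> {}" using partition_on_block_nonempty[OF assms(3)] E by simp
    ultimately show "E \<in> (\<Union>C\<in>?T. {E\<in>\<sigma>. E \<subseteq> C})" using A E by blast
  qed blast
  moreover have "card (\<Union>C\<in>?T. {E\<in>\<sigma>. E \<subseteq> C}) = (\<Sum>C\<in>?T. card {E\<in>\<sigma>. E \<subseteq> C})"
  proof (rule card_UN_disjoint)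
    show "\<forall>C\<in>?T. \<forall>C'\<in>?T. C \<noteq> C' \<longrightarrow> {E\<in>\<sigma>. E \<subseteq> C} \<inter> {E\<in>\<sigma>. E \<subseteq> C'} = {}"
    proof (intro ballI impI equals0I)
      fix C C' E
      assume CC': "C \<in> ?T" "C' \<in> ?T" "C \<noteq> C'" and E: "E \<in> {E\<in>\<sigma>. E \<subseteq> C} \<inter> {E\<in>\<sigma>. E \<subseteq> C'}"
      then obtain x where "x \<in> E" using partition_on_block_nonempty[OF assms(3)] by blast
      with CC' E show False using partition_on_block_eq[OF assms(4), of C C' x] by blast
    qed
  qed (use assms(1,2) in auto)
  ultimately show ?thesis by (simp add: nblocks_def)
qed

definition coarsenings :: "'b set \<Rightarrow> 'b set set \<Rightarrow> 'b set set set" where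
  "coarsenings S \<sigma> = {\<tau>. partition_on S \<tau> \<and> refines \<sigma> \<tau>}"

lemma finite_coarsenings: "finite S \<Longrightarrow> finite (coarsenings S \<sigma>)"
  unfolding coarsenings_def by (rule finite_subset[OF _ finitely_many_partition_on]) auto

lemma sum_partitions_eq_coarsenings:
  "finite S \<Longrightarrow> (\<Sum>\<tau>\<in>partitions S. mu a b \<sigma> \<tau> * f \<tau>) = (\<Sum>\<tau>\<in>coarsenings S \<sigma>. mu a b \<sigma> \<tau> * f \<tau>)"
  unfolding partitions_def
  by (rule sum.mono_neutral_right[OF finitely_many_partition_on]) (auto simp: coarsenings_def mu_altdef)

definition add_to_block :: "'b set \<Rightarrow> 'b set \<Rightarrow> 'b set set \<Rightarrow> 'b set set" where
  "add_to_block D C \<tau> = insert (C \<union> D) (\<tau> - {C})"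

lemma refines_add_to_block:
  assumes "refines \<tau> \<pi>" "C \<subseteq> A"
  shows "refines (add_to_block D C \<tau>) (add_to_block D A \<pi>)"
proof -
  have "\<exists>B\<in>add_to_block D A \<pi>. E \<subseteq> B" if E: "E \<in> \<tau>" "E \<noteq> C" for E
  proof -
    obtain B where B: "B \<in> \<pi>" "E \<subseteq> B" using assms(1) E(1) unfolding refines_def by blast
    show ?thesis
    proof (cases "B = A")
      case True
      then show ?thesis using B(2) by (intro bexI[of _ "A \<union> D"]) (auto simp: add_to_block_def)
    next
      case False
      then show ?thesis using B by (intro bexI[of _ B]) (auto simp: add_to_block_def)
    qed
  qed
  moreover have "C \<union> D \<subseteq> A \<union> D" using assms(2) by blast
  ultimately show ?thesis unfolding refines_def add_to_block_def by blast
qed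

locale fresh_block =
  fixes S D :: "'b set"
  assumes finite_S: "finite S" and D_nonempty: "D \<noteq> {}" and D_disjoint: "D \<inter> S = {}"
begin

lemma block_disjoint_D: "partition_on S \<tau> \<Longrightarrow> C \<in> \<tau> \<Longrightarrow> C \<inter> D = {}"
  using partition_on_block_subset D_disjoint by blast

lemma D_notin: "partition_on S \<tau> \<Longrightarrow> D \<notin> \<tau>"
  using block_disjoint_D D_nonempty by blast

lemma partition_on_insert_D: "partition_on S \<tau> \<Longrightarrow> partition_on (D \<union> S) (insert D \<tau>)"
  using partition_on_insert_disjnt D_disjoint D_nonempty by (simp add: disjnt_def)

lemma partition_on_add_to_block:
  assumes "partition_on S \<tau>" "C \<in> \<tau>"
  shows "partition_on (D \<union> S) (add_to_block D C \<tau>)"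
proof -
  have "partition_on ((C \<union> D) \<union> (S - C)) (add_to_block D C \<tau>)"
    unfolding add_to_block_def using partition_on_Diff_block[OF assms] D_disjoint D_nonempty
    by (intro partition_on_insert_disjnt) (auto simp: disjnt_def)
  moreover have "(C \<union> D) \<union> (S - C) = D \<union> S" using partition_on_block_subset[OF assms] by auto
  ultimately show ?thesis by simp
qed

lemma partition_on_D_cases:
  assumes \<tau>': "partition_on (D \<union> S) \<tau>'" and E: "E \<in> \<tau>'" "D \<subseteq> E"
  obtains (isolated) \<tau> where "partition_on S \<tau>" "\<tau>' = insert D \<tau>"
    | (absorbed) \<tau> C where "partition_on S \<tau>" "C \<in> \<tau>" "\<tau>' = add_to_block D C \<tau>"
proof (cases "E = D")
  case True
  have "D \<union> S - D = S" using D_disjoint by auto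
  then have "partition_on S (\<tau>' - {D})"
    using partition_on_Diff_block[OF \<tau>'] E True by metis
  moreover have "\<tau>' = insert D (\<tau>' - {D})" using E True by auto
  ultimately show ?thesis by (rule isolated)
next
  case False
  define C where "C = E - D"
  have C: "C \<noteq> {}" "C \<union> D = E" using False E by (auto simp: C_def)
  have "C \<notin> \<tau>' - {E}" using partition_on_block_eq[OF \<tau>' _ E(1)] C by blast
  then have "\<tau>' = add_to_block D C (insert C (\<tau>' - {E}))"
    using E C by (auto simp: add_to_block_def)
  moreover have "partition_on (C \<union> (D \<union> S - E)) (insert C (\<tau>' - {E}))"
    using partition_on_Diff_block[OF \<tau>' E(1)] C by (intro partition_on_insert_disjnt) (auto simp: disjnt_def C_def)
  moreover have "C \<union> (D \<union> S - E) = S"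
    using partition_on_block_subset[OF \<tau>' E(1)] E(2) D_disjoint by (auto simp: C_def)
  ultimately show ?thesis using absorbed[of "insert C (\<tau>' - {E})" C] by auto
qed

lemma refines_insert_insert_iff:
  assumes "partition_on S \<sigma>"
  shows "refines (insert D \<sigma>) (insert D \<tau>) \<longleftrightarrow> refines \<sigma> \<tau>"
proof -
  have "\<not> E \<subseteq> D" if "E \<in> \<sigma>" for E
    using block_disjoint_D[OF assms that] partition_on_block_nonempty[OF assms that] by blast
  then show ?thesis by (auto simp: refines_def)
qed

lemma refines_insert_add_iff:
  assumes "partition_on S \<sigma>" "A \<in> \<pi>"
  shows "refines (insert D \<sigma>) (add_to_block D A \<pi>) \<longleftrightarrow> refines \<sigma> \<pi>"
proof -
  have "E \<subseteq> A \<union> D \<longleftrightarrow> E \<subseteq> A" if "E \<in> \<sigma>" for E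
    using block_disjoint_D[OF assms(1) that] by blast
  then show ?thesis using assms(2) by (auto simp: refines_def add_to_block_def) blast
qed

lemma refines_add_add_iff:
  assumes \<tau>: "partition_on S \<tau>" "C \<in> \<tau>" and \<pi>: "partition_on S \<pi>" "A \<in> \<pi>"
  shows "refines (add_to_block D C \<tau>) (add_to_block D A \<pi>) \<longleftrightarrow> refines \<tau> \<pi> \<and> C \<subseteq> A"
proof -
  have notD: "\<not> D \<subseteq> B" if "B \<in> \<pi>" for B
    using block_disjoint_D[OF \<pi>(1) that] D_nonempty by blast
  have shrink: "E \<subseteq> A" if "E \<in> \<tau>" "E \<subseteq> A \<union> D" for E
    using block_disjoint_D[OF \<tau>(1) that(1)] that(2) by blast
  show ?thesis
  proof
    assume r: "refines (add_to_block D C \<tau>) (add_to_block D A \<pi>)"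
    have "\<exists>B\<in>\<pi>. E \<subseteq> B" if E: "E \<in> \<tau>" "E \<noteq> C" for E
    proof -
      obtain B where B: "B \<in> add_to_block D A \<pi>" "E \<subseteq> B"
        using r E unfolding refines_def add_to_block_def by blast
      show ?thesis
      proof (cases "B = A \<union> D")
        case True
        then show ?thesis using shrink[OF E(1)] B(2) \<pi>(2) by blast
      next
        case False
        then show ?thesis using B unfolding add_to_block_def by blast
      qed
    qed
    moreover obtain B where B: "B \<in> add_to_block D A \<pi>" "C \<union> D \<subseteq> B"
      using r unfolding refines_def add_to_block_def by blast
    then have "B = A \<union> D" using notD unfolding add_to_block_def by blast
    then have "C \<subseteq> A" using shrink[OF \<tau>(2)] B(2) by blast
    ultimately show "refines \<tau> \<pi> \<and> C \<subseteq> A" using \<pi>(2) unfolding refines_def by blast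
  qed (use refines_add_to_block in blast)
qed

lemma not_refines_add_insert:
  assumes "partition_on S \<tau>" "C \<in> \<tau>" "partition_on S \<pi>"
  shows "\<not> refines (add_to_block D C \<tau>) (insert D \<pi>)"
proof
  assume "refines (add_to_block D C \<tau>) (insert D \<pi>)"
  then obtain B where B: "B \<in> insert D \<pi>" "C \<union> D \<subseteq> B"
    unfolding refines_def add_to_block_def by blast
  show False
  proof (cases "B = D")
    case True
    then show False using B(2) block_disjoint_D[OF assms(1,2)] partition_on_block_nonempty[OF assms(1,2)] by blast
  next
    case False
    then show False using B block_disjoint_D[OF assms(3)] D_nonempty by blast
  qed
qed

lemma nblocks_insert_D:
  assumes "partition_on S \<sigma>" "B \<subseteq> S"
  shows "nblocks (insert D \<sigma>) B = nblocks \<sigma> B"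
  using nblocks_insert[OF finite_elements[OF finite_S assms(1)] D_notin[OF assms(1)]] assms(2)
    D_disjoint D_nonempty by auto

lemma nblocks_insert_D_Un:
  assumes "partition_on S \<sigma>"
  shows "nblocks (insert D \<sigma>) (A \<union> D) = Suc (nblocks \<sigma> A)"
proof -
  have "{E\<in>\<sigma>. E \<subseteq> A \<union> D} = {E\<in>\<sigma>. E \<subseteq> A}" using block_disjoint_D[OF assms] by blast
  then show ?thesis
    using nblocks_insert[OF finite_elements[OF finite_S assms] D_notin[OF assms]]
    by (simp add: nblocks_def)
qed

lemma nblocks_add_to_block_Un:
  assumes "partition_on S \<tau>" "C \<in> \<tau>" "C \<subseteq> A"
  shows "nblocks (add_to_block D C \<tau>) (A \<union> D) = nblocks \<tau> A"
proof -
  let ?T = "{E\<in>\<tau>. E \<subseteq> A}"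
  have C: "C \<in> ?T" and fin: "finite ?T"
    using assms finite_elements[OF finite_S assms(1)] by auto
  have "{E\<in>add_to_block D C \<tau>. E \<subseteq> A \<union> D} = insert (C \<union> D) (?T - {C})"
    using assms block_disjoint_D[OF assms(1)] by (auto simp: add_to_block_def)
  also have "card \<dots> = Suc (card (?T - {C}))"
    using block_disjoint_D[OF assms(1)] D_nonempty fin by (intro card_insert_disjoint) auto
  also have "\<dots> = card ?T" by (rule card_Suc_Diff1[OF fin C])
  finally show ?thesis by (simp add: nblocks_def)
qed

lemma nblocks_add_to_block_other:
  assumes "partition_on S \<tau>" "C \<in> \<tau>" "B \<subseteq> S" "\<not> C \<subseteq> B"
  shows "nblocks (add_to_block D C \<tau>) B = nblocks \<tau> B"
proof -
  have "\<not> C \<union> D \<subseteq> B" using assms(4) by blast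
  then have "{E\<in>add_to_block D C \<tau>. E \<subseteq> B} = {E\<in>\<tau>. E \<subseteq> B}"
    using assms(4) by (auto simp: add_to_block_def)
  then show ?thesis by (simp add: nblocks_def)
qed

lemma mu_insert_insert:
  assumes \<sigma>: "partition_on S \<sigma>" and \<tau>: "partition_on S \<tau>"
  shows "mu a b (insert D \<sigma>) (insert D \<tau>) = mu a b \<sigma> \<tau>"
proof (cases "refines \<sigma> \<tau>")
  case True
  have "(\<Prod>B\<in>insert D \<tau>. block_factor a b (nblocks (insert D \<sigma>) B))
      = block_factor a b (nblocks (insert D \<sigma>) D)
        * (\<Prod>B\<in>\<tau>. block_factor a b (nblocks (insert D \<sigma>) B))"
    using finite_elements[OF finite_S \<tau>] D_notin[OF \<tau>] by simp
  also have "\<dots> = (\<Prod>B\<in>\<tau>. block_factor a b (nblocks \<sigma> B))"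
    using nblocks_insert_D_Un[OF \<sigma>, of "{}"] nblocks_empty[OF \<sigma>]
      nblocks_insert_D[OF \<sigma> partition_on_block_subset[OF \<tau>]]
    by simp
  finally show ?thesis using True by (simp add: mu_altdef refines_insert_insert_iff[OF \<sigma>])
qed (simp add: mu_altdef refines_insert_insert_iff[OF \<sigma>])

lemma mu_insert_add:
  assumes \<sigma>: "partition_on S \<sigma>" and \<pi>: "partition_on S \<pi>" "A \<in> \<pi>"
  shows "mu a b (insert D \<sigma>) (add_to_block D A \<pi>) = mu a b \<sigma> \<pi> * (b - of_nat (nblocks \<sigma> A) * a)"
proof (cases "refines \<sigma> \<pi>")
  case True
  let ?f = "\<lambda>B. block_factor a b (nblocks \<sigma> B)"
  have fin: "finite \<pi>" using finite_elements[OF finite_S \<pi>(1)] .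
  have "A \<union> D \<notin> \<pi> - {A}" using block_disjoint_D[OF \<pi>(1)] D_nonempty by blast
  then have "(\<Prod>B\<in>add_to_block D A \<pi>. block_factor a b (nblocks (insert D \<sigma>) B))
      = block_factor a b (Suc (nblocks \<sigma> A)) * (\<Prod>B\<in>\<pi> - {A}. ?f B)"
    using fin nblocks_insert_D_Un[OF \<sigma>] nblocks_insert_D[OF \<sigma> partition_on_block_subset[OF \<pi>(1)]]
    by (simp add: add_to_block_def)
  also have "\<dots> = ?f A * (\<Prod>B\<in>\<pi> - {A}. ?f B) * (b - of_nat (nblocks \<sigma> A) * a)"
    using nblocks_pos[OF finite_elements[OF finite_S \<sigma>] \<sigma> \<pi>(1) True \<pi>(2)]
    by (simp add: block_factor_Suc mult_ac)
  also have "?f A * (\<Prod>B\<in>\<pi> - {A}. ?f B) = (\<Prod>B\<in>\<pi>. ?f B)"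
    by (rule prod.remove[OF fin \<pi>(2), symmetric])
  finally show ?thesis
    using True refines_insert_add_iff[OF \<sigma> \<pi>(2)] by (simp add: mu_altdef)
qed (simp add: mu_altdef refines_insert_add_iff[OF \<sigma> \<pi>(2)])

lemma mu_add_add:
  assumes \<tau>: "partition_on S \<tau>" "C \<in> \<tau>" and \<pi>: "partition_on S \<pi>" "A \<in> \<pi>"
  shows "mu a b (add_to_block D C \<tau>) (add_to_block D A \<pi>) = (if C \<subseteq> A then mu a b \<tau> \<pi> else 0)"
proof (cases "refines \<tau> \<pi> \<and> C \<subseteq> A")
  case True
  let ?f = "\<lambda>B. block_factor a b (nblocks \<tau> B)"
  have fin: "finite \<pi>" using finite_elements[OF finite_S \<pi>(1)] .
  have "\<not> C \<subseteq> B" if "B \<in> \<pi> - {A}" for B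
    using True that partition_on_block_eq[OF \<pi>(1) _ \<pi>(2)] partition_on_block_nonempty[OF \<tau>] by blast
  moreover have "A \<union> D \<notin> \<pi> - {A}" using block_disjoint_D[OF \<pi>(1)] D_nonempty by blast
  ultimately have "(\<Prod>B\<in>add_to_block D A \<pi>. block_factor a b (nblocks (add_to_block D C \<tau>) B))
      = ?f A * (\<Prod>B\<in>\<pi> - {A}. ?f B)"
    using fin True nblocks_add_to_block_Un[OF \<tau>]
      nblocks_add_to_block_other[OF \<tau> partition_on_block_subset[OF \<pi>(1)]]
    by (simp add: add_to_block_def)
  also have "\<dots> = (\<Prod>B\<in>\<pi>. ?f B)"
    by (rule prod.remove[OF fin \<pi>(2), symmetric])
  finally show ?thesis
    using True refines_add_add_iff[OF \<tau> \<pi>] by (simp add: mu_altdef)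
qed (auto simp: mu_altdef refines_add_add_iff[OF \<tau> \<pi>])

lemma mu_add_insert:
  assumes "partition_on S \<tau>" "C \<in> \<tau>" "partition_on S \<pi>"
  shows "mu a b (add_to_block D C \<tau>) (insert D \<pi>) = 0"
  using not_refines_add_insert[OF assms] by (simp add: mu_altdef)

lemma coarsenings_insert_D:
  assumes \<sigma>: "partition_on S \<sigma>"
  shows "coarsenings (D \<union> S) (insert D \<sigma>)
    = insert D ` coarsenings S \<sigma> \<union> (\<lambda>(\<tau>, C). add_to_block D C \<tau>) ` (SIGMA \<tau>:coarsenings S \<sigma>. \<tau>)"
    (is "?L = ?I \<union> ?A")
proof
  show "?L \<subseteq> ?I \<union> ?A"
  proof
    fix \<tau>' assume "\<tau>' \<in> ?L"
    then have \<tau>': "partition_on (D \<union> S) \<tau>'" "refines (insert D \<sigma>) \<tau>'"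
      by (auto simp: coarsenings_def)
    then obtain E where "E \<in> \<tau>'" "D \<subseteq> E" by (auto simp: refines_def)
    with \<tau>'(1) show "\<tau>' \<in> ?I \<union> ?A"
    proof (cases rule: partition_on_D_cases)
      case (isolated \<tau>)
      then show ?thesis using \<tau>'(2) refines_insert_insert_iff[OF \<sigma>] by (auto simp: coarsenings_def)
    next
      case (absorbed \<tau> C)
      then have "(\<tau>, C) \<in> (SIGMA \<tau>:coarsenings S \<sigma>. \<tau>)"
        using \<tau>'(2) refines_insert_add_iff[OF \<sigma>] by (auto simp: coarsenings_def)
      then show ?thesis using absorbed(3) by force
    qed
  qed
  show "?I \<union> ?A \<subseteq> ?L"
    using partition_on_insert_D partition_on_add_to_block
      refines_insert_insert_iff[OF \<sigma>] refines_insert_add_iff[OF \<sigma>]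
    by (auto simp: coarsenings_def)
qed

lemma add_to_block_inverse:
  assumes "partition_on S \<tau>" "C \<in> \<tau>"
  shows "insert C (add_to_block D C \<tau> - {C \<union> D}) = \<tau>"
proof -
  have "C \<union> D \<notin> \<tau>" using block_disjoint_D[OF assms(1)] D_nonempty by blast
  then show ?thesis using assms(2) by (auto simp: add_to_block_def)
qed

lemma inj_on_add_to_block:
  "inj_on (\<lambda>(\<tau>, C). add_to_block D C \<tau>) (SIGMA \<tau>:{\<tau>. partition_on S \<tau>}. \<tau>)"
proof (rule inj_onI, clarsimp)
  fix \<tau>1 C1 \<tau>2 C2
  assume \<tau>1: "partition_on S \<tau>1" "C1 \<in> \<tau>1" and \<tau>2: "partition_on S \<tau>2" "C2 \<in> \<tau>2"
    and eq: "add_to_block D C1 \<tau>1 = add_to_block D C2 \<tau>2"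
  have "C1 \<union> D \<in> add_to_block D C2 \<tau>2" using eq by (metis add_to_block_def insertI1)
  moreover have "C1 \<union> D \<notin> \<tau>2" using block_disjoint_D[OF \<tau>2(1)] D_nonempty by blast
  ultimately have "C1 \<union> D = C2 \<union> D" unfolding add_to_block_def by blast
  then have C: "C1 = C2" using block_disjoint_D[OF \<tau>1] block_disjoint_D[OF \<tau>2] by blast
  then have "\<tau>1 = \<tau>2"
    using add_to_block_inverse[OF \<tau>1] add_to_block_inverse[OF \<tau>2] eq by metis
  with C show "\<tau>1 = \<tau>2 \<and> C1 = C2" by simp
qed

lemma sum_coarsenings_insert_D:
  assumes \<sigma>: "partition_on S \<sigma>"
  shows "sum F (coarsenings (D \<union> S) (insert D \<sigma>))
    = (\<Sum>\<tau>\<in>coarsenings S \<sigma>. F (insert D \<tau>) + (\<Sum>C\<in>\<tau>. F (add_to_block D C \<tau>)))"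
proof -
  let ?R = "coarsenings S \<sigma>" and ?g = "\<lambda>(\<tau>, C). add_to_block D C \<tau>"
  have R: "partition_on S \<tau>" "finite \<tau>" if "\<tau> \<in> ?R" for \<tau>
    using that finite_elements[OF finite_S] by (auto simp: coarsenings_def)
  have finR: "finite ?R" by (rule finite_coarsenings[OF finite_S])
  have inj_insert: "inj_on (insert D) ?R"
    by (rule inj_onI) (metis R(1) D_notin insert_ident)
  have inj_add: "inj_on ?g (SIGMA \<tau>:?R. \<tau>)"
    by (rule inj_on_subset[OF inj_on_add_to_block]) (auto simp: coarsenings_def)
  have "D \<notin> add_to_block D C \<tau>" if "\<tau> \<in> ?R" "C \<in> \<tau>" for \<tau> C
    using block_disjoint_D[OF R(1)[OF that(1)] that(2)] partition_on_block_nonempty[OF R(1)[OF that(1)] that(2)]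
      D_notin[OF R(1)[OF that(1)]] by (auto simp: add_to_block_def)
  then have disj: "insert D ` ?R \<inter> ?g ` (SIGMA \<tau>:?R. \<tau>) = {}" by auto
  have "sum F (coarsenings (D \<union> S) (insert D \<sigma>))
      = sum F (insert D ` ?R) + sum F (?g ` (SIGMA \<tau>:?R. \<tau>))"
    unfolding coarsenings_insert_D[OF \<sigma>]
    by (rule sum.union_disjoint) (use finR R(2) disj in auto)
  also have "sum F (insert D ` ?R) = (\<Sum>\<tau>\<in>?R. F (insert D \<tau>))"
    by (simp add: sum.reindex[OF inj_insert])
  also have "sum F (?g ` (SIGMA \<tau>:?R. \<tau>)) = (\<Sum>(\<tau>, C)\<in>(SIGMA \<tau>:?R. \<tau>). F (add_to_block D C \<tau>))"
    by (simp add: sum.reindex[OF inj_add] comp_def prod.case_distrib)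
  also have "\<dots> = (\<Sum>\<tau>\<in>?R. \<Sum>C\<in>\<tau>. F (add_to_block D C \<tau>))"
    by (rule sum.Sigma[symmetric]) (use finR R(2) in auto)
  finally show ?thesis by (simp add: sum.distrib)
qed

lemma sum_mu_isolated_block:
  assumes \<sigma>: "partition_on S \<sigma>" and \<pi>: "partition_on S \<pi>"
    and IH: "(\<Sum>\<tau>\<in>coarsenings S \<sigma>. mu q1 q2 \<sigma> \<tau> * mu q2 q3 \<tau> \<pi>) = mu q1 q3 \<sigma> \<pi>"
  shows "(\<Sum>\<tau>'\<in>coarsenings (D \<union> S) (insert D \<sigma>). mu q1 q2 (insert D \<sigma>) \<tau>' * mu q2 q3 \<tau>' (insert D \<pi>))
    = mu q1 q3 (insert D \<sigma>) (insert D \<pi>)"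
proof -
  have "mu q1 q2 (insert D \<sigma>) (insert D \<tau>) * mu q2 q3 (insert D \<tau>) (insert D \<pi>)
      + (\<Sum>C\<in>\<tau>. mu q1 q2 (insert D \<sigma>) (add_to_block D C \<tau>) * mu q2 q3 (add_to_block D C \<tau>) (insert D \<pi>))
      = mu q1 q2 \<sigma> \<tau> * mu q2 q3 \<tau> \<pi>" if "\<tau> \<in> coarsenings S \<sigma>" for \<tau>
  proof -
    have \<tau>: "partition_on S \<tau>" using that by (simp add: coarsenings_def)
    have "(\<Sum>C\<in>\<tau>. mu q1 q2 (insert D \<sigma>) (add_to_block D C \<tau>) * mu q2 q3 (add_to_block D C \<tau>) (insert D \<pi>)) = 0"
      by (rule sum.neutral) (simp add: mu_add_insert[OF \<tau> _ \<pi>])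
    then show ?thesis by (simp add: mu_insert_insert[OF \<sigma> \<tau>] mu_insert_insert[OF \<tau> \<pi>])
  qed
  then show ?thesis
    using IH by (simp add: sum_coarsenings_insert_D[OF \<sigma>] mu_insert_insert[OF \<sigma> \<pi>])
qed

lemma absorbed_block_contribution:
  assumes \<sigma>: "partition_on S \<sigma>" and "\<tau> \<in> coarsenings S \<sigma>" and \<pi>: "partition_on S \<pi>" "A \<in> \<pi>"
  shows "mu q1 q2 (insert D \<sigma>) (insert D \<tau>) * mu q2 q3 (insert D \<tau>) (add_to_block D A \<pi>)
      + (\<Sum>C\<in>\<tau>. mu q1 q2 (insert D \<sigma>) (add_to_block D C \<tau>) * mu q2 q3 (add_to_block D C \<tau>) (add_to_block D A \<pi>))
    = (q3 - of_nat (nblocks \<sigma> A) * q1) * (mu q1 q2 \<sigma> \<tau> * mu q2 q3 \<tau> \<pi>)"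
proof -
  have \<tau>: "partition_on S \<tau>" "refines \<sigma> \<tau>" using assms(2) by (auto simp: coarsenings_def)
  have fin: "finite \<tau>" using finite_elements[OF finite_S \<tau>(1)] .
  let ?m = "mu q1 q2 \<sigma> \<tau> * mu q2 q3 \<tau> \<pi>"
  have "(\<Sum>C\<in>\<tau>. mu q1 q2 (insert D \<sigma>) (add_to_block D C \<tau>) * mu q2 q3 (add_to_block D C \<tau>) (add_to_block D A \<pi>))
      = (\<Sum>C\<in>\<tau>. if C \<subseteq> A then ?m * (q2 - of_nat (nblocks \<sigma> C) * q1) else 0)"
    by (rule sum.cong) (simp_all add: mu_insert_add[OF \<sigma> \<tau>(1)] mu_add_add[OF \<tau>(1) _ \<pi>] mult_ac)
  also have "\<dots> = ?m * (\<Sum>C\<in>{C\<in>\<tau>. C \<subseteq> A}. q2 - of_nat (nblocks \<sigma> C) * q1)"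
    by (simp add: sum.inter_filter[OF fin, symmetric] sum_distrib_left)
  also have "\<dots> = ?m * (of_nat (nblocks \<tau> A) * q2 - of_nat (nblocks \<sigma> A) * q1)"
  proof (cases "refines \<tau> \<pi>")
    case True
    let ?T = "{C\<in>\<tau>. C \<subseteq> A}"
    have "(\<Sum>C\<in>?T. q2 - of_nat (nblocks \<sigma> C) * q1)
        = of_nat (card ?T) * q2 - of_nat (\<Sum>C\<in>?T. nblocks \<sigma> C) * q1"
      by (simp add: sum_subtractf sum_distrib_right)
    also have "(\<Sum>C\<in>?T. nblocks \<sigma> C) = nblocks \<sigma> A"
      using sum_nblocks[OF finite_elements[OF finite_S \<sigma>] fin \<sigma> \<tau>] refines_block_cases[OF \<pi> True] by blast
    also have "card ?T = nblocks \<tau> A" by (simp add: nblocks_def)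
    finally show ?thesis by simp
  qed (simp add: mu_altdef)
  finally show ?thesis
    by (simp add: mu_insert_insert[OF \<sigma> \<tau>(1)] mu_insert_add[OF \<tau>(1) \<pi>] algebra_simps)
qed

lemma sum_mu_absorbed_block:
  assumes \<sigma>: "partition_on S \<sigma>" and \<pi>: "partition_on S \<pi>" "A \<in> \<pi>"
    and IH: "(\<Sum>\<tau>\<in>coarsenings S \<sigma>. mu q1 q2 \<sigma> \<tau> * mu q2 q3 \<tau> \<pi>) = mu q1 q3 \<sigma> \<pi>"
  shows "(\<Sum>\<tau>'\<in>coarsenings (D \<union> S) (insert D \<sigma>). mu q1 q2 (insert D \<sigma>) \<tau>' * mu q2 q3 \<tau>' (add_to_block D A \<pi>))
    = mu q1 q3 (insert D \<sigma>) (add_to_block D A \<pi>)"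
proof -
  have "(\<Sum>\<tau>'\<in>coarsenings (D \<union> S) (insert D \<sigma>). mu q1 q2 (insert D \<sigma>) \<tau>' * mu q2 q3 \<tau>' (add_to_block D A \<pi>))
      = (\<Sum>\<tau>\<in>coarsenings S \<sigma>. (q3 - of_nat (nblocks \<sigma> A) * q1) * (mu q1 q2 \<sigma> \<tau> * mu q2 q3 \<tau> \<pi>))"
    unfolding sum_coarsenings_insert_D[OF \<sigma>] by (rule sum.cong[OF refl absorbed_block_contribution[OF \<sigma> _ \<pi>]])
  also have "\<dots> = mu q1 q3 \<sigma> \<pi> * (q3 - of_nat (nblocks \<sigma> A) * q1)"
    by (simp add: sum_distrib_left[symmetric] IH mult.commute)
  finally show ?thesis by (simp add: mu_insert_add[OF \<sigma> \<pi>])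
qed

end

lemma sum_mu_coarsenings:
  fixes q1 q2 q3 :: "'a::comm_ring_1"
  assumes "finite S" "partition_on S \<sigma>" "partition_on S \<pi>"
  shows "(\<Sum>\<tau>\<in>coarsenings S \<sigma>. mu q1 q2 \<sigma> \<tau> * mu q2 q3 \<tau> \<pi>) = mu q1 q3 \<sigma> \<pi>"
proof -
  have "finite \<sigma>" using finite_elements assms(1,2) .
  then show ?thesis using assms
  proof (induction \<sigma> arbitrary: S \<pi> rule: finite_induct)
    case empty
    then have "S = {}" "\<pi> = {}" by (auto simp: partition_on_def)
    then show ?case by (simp add: partition_on_empty coarsenings_def mu_altdef refines_def)
  next
    case (insert D \<sigma>)
    have D: "D \<noteq> {}" "D \<subseteq> S" using insert.prems(2) by (auto simp: partition_on_def)
    interpret fresh_block "S - D" D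
      using insert.prems(1) D by unfold_locales auto
    have \<sigma>: "partition_on (S - D) \<sigma>"
      using partition_on_Diff_block[OF insert.prems(2) insertI1] insert.hyps(2) by simp
    have IH: "(\<Sum>\<tau>\<in>coarsenings (S - D) \<sigma>. mu q1 q2 \<sigma> \<tau> * mu q2 q3 \<tau> \<pi>') = mu q1 q3 \<sigma> \<pi>'"
      if "partition_on (S - D) \<pi>'" for \<pi>'
      using insert.IH insert.prems(1) \<sigma> that by simp
    show ?case
    proof (cases "refines (insert D \<sigma>) \<pi>")
      case False
      have "\<not> refines \<tau> \<pi>" if "\<tau> \<in> coarsenings S (insert D \<sigma>)" for \<tau>
        using that False refines_trans by (auto simp: coarsenings_def)
      then show ?thesis using False by (simp add: mu_altdef)
    next
      case True
      then obtain E where E: "E \<in> \<pi>" "D \<subseteq> E" by (auto simp: refines_def)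
      have "partition_on (D \<union> (S - D)) \<pi>" using insert.prems(3) by (simp add: Un_absorb1[OF D(2)])
      from this E show ?thesis
      proof (cases rule: partition_on_D_cases)
        case (isolated \<pi>0)
        then show ?thesis
          using sum_mu_isolated_block[OF \<sigma> isolated(1) IH[OF isolated(1)]] by (simp add: Un_absorb1[OF D(2)])
      next
        case (absorbed \<pi>0 A)
        then show ?thesis
          using sum_mu_absorbed_block[OF \<sigma> absorbed(1,2) IH[OF absorbed(1)]] by (simp add: Un_absorb1[OF D(2)])
      qed
    qed
  qed
qed

theorem theoremA1:
  fixes S :: "'b set" and q1 q2 q3 :: "'a::comm_ring_1"
  assumes "finite S"
    and "\<sigma> \<in> partitions S" and "\<pi> \<in> partitions S"
  shows "(\<Sum>\<tau>\<in>partitions S. mu q1 q2 \<sigma> \<tau> * mu q2 q3 \<tau> \<pi>) = mu q1 q3 \<sigma> \<pi>"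
proof -
  have "partition_on S \<sigma>" "partition_on S \<pi>" using assms(2,3) by (simp_all add: partitions_def)
  with assms(1) show ?thesis by (simp add: sum_partitions_eq_coarsenings sum_mu_coarsenings)
qed

end
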